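(* In the continuous-shock setting below, let $a^*_\pi:=L^{-1}\!\left(\Phi^{-1}\!\left(\frac{\psi-1}{(1+\lambda\sigma)\psi}\right)\right)$. Then (i) exactly two restricted perceptions equilibria exist if and only if $h(a^*_\pi)>a^*_\pi$; (ii) no restricted perceptions equilibrium exists if and only if $h(a^*_\pi)<a^*_\pi$.
   Context: Parameters: $0<\beta<1$, $\sigma,\lambda,\mu>0$, $\psi>1$. The shock follows $\epsilon_t=\rho\epsilon_{t-1}+v_t$ with $\rho\in[0,1)$, $v_t\sim\mathcal N(0,\sigma_v^2)$ i.i.d., so its stationary distribution is $\mathcal N(0,\sigma_\epsilon^2)$ with $\sigma_\epsilon:=\sqrt{\sigma_v^2/(1-\rho^2)}$. Model: $x_t=\hat E_t x_{t+1}-\sigma(i_t-\hat E_t\pi_{t+1})+\epsilon_t$, $\pi_t=\lambda x_t+\beta\hat E_t\pi_{t+1}$, $i_t=\max\{\psi\pi_t,-\mu\}$. Restricted perceptions: agents forecast $\hat E_t\pi_{t+1}=a_\pi$ and $\hat E_t x_{t+1}=\frac{1-\beta}{\lambda}a_\pi$ for a constant $a_\pi\in\mathbb{R}$. Given $a_\pi$, inflation is $\pi_t=(1+\lambda\sigma)a_\pi+\lambda\sigma\mu+\lambda\epsilon_t$ if $\psi\big((1+\lambda\sigma)a_\pi+\lambda\sigma\mu+\lambda\epsilon_t\big)\le-\mu$ (binding zero lower bound), and $\pi_t=\frac{1+\lambda\sigma}{1+\lambda\sigma\psi}a_\pi+\frac{\lambda}{1+\lambda\sigma\psi}\epsilon_t$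 otherwise. Let $h(a_\pi)$ be the mean of $\pi_t$ when $\epsilon_t\sim\mathcal N(0,\sigma_\epsilon^2)$. A restricted perceptions equilibrium is a value $\bar a_\pi\in\mathbb{R}$ with $h(\bar a_\pi)=\bar a_\pi$. $\Phi$ is the standard normal CDF, and $L(a_\pi):=(\sigma_\epsilon\lambda)^{-1}\big(-\mu/\psi-(1+\lambda\sigma)a_\pi-\lambda\sigma\mu\big)$ (an affine bijection of $\mathbb{R}$). *)

theory Defs
  imports "HOL-Probability.Probability"
begin

definition Phi :: "real \<Rightarrow> real" where
  "Phi x = measure (density lborel std_normal_density) {..x}"

text \<open>Inverse of the standard normal CDF (Phi is a bijection onto (0,1)).\<close>
definition Phi_inv :: "real \<Rightarrow> real" where
  "Phi_inv p = (THE z. Phi z = p)"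

text \<open>Stationary standard deviation of the AR(1) shock.\<close>
definition sigma_eps :: "real \<Rightarrow> real \<Rightarrow> real" where
  "sigma_eps sigma_v rho = sqrt (sigma_v\<^sup>2 / (1 - rho\<^sup>2))"

definition infl :: "real \<Rightarrow> real \<Rightarrow> real \<Rightarrow> real \<Rightarrow> real \<Rightarrow> real \<Rightarrow> real" where
  "infl sig lam mu psi a e =
     (if psi * ((1 + lam * sig) * a + lam * sig * mu + lam * e) \<le> - mu
      then (1 + lam * sig) * a + lam * sig * mu + lam * e
      else (1 + lam * sig) / (1 + lam * sig * psi) * a
             + lam / (1 + lam * sig * psi) * e)"

definition hmap :: "real \<Rightarrow> real \<Rightarrow> real \<Rightarrow> real \<Rightarrow> real \<Rightarrow> real \<Rightarrow> real \<Rightarrow> real" where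
  "hmap sig lam mu psi sigma_v rho a =
     integral\<^sup>L (density lborel (normal_density 0 (sigma_eps sigma_v rho)))
       (\<lambda>e. infl sig lam mu psi a e)"

definition Lmap :: "real \<Rightarrow> real \<Rightarrow> real \<Rightarrow> real \<Rightarrow> real \<Rightarrow> real \<Rightarrow> real \<Rightarrow> real" where
  "Lmap sig lam mu psi sigma_v rho a =
     (-mu / psi - (1 + lam * sig) * a - lam * sig * mu) / (sigma_eps sigma_v rho * lam)"

definition Lmap_inv :: "real \<Rightarrow> real \<Rightarrow> real \<Rightarrow> real \<Rightarrow> real \<Rightarrow> real \<Rightarrow> real \<Rightarrow> real" where
  "Lmap_inv sig lam mu psi sigma_v rho z = (THE a. Lmap sig lam mu psi sigma_v rho a = z)"

definition RPE :: "real \<Rightarrow> real \<Rightarrow> real \<Rightarrow> real \<Rightarrow> real \<Rightarrow> real \<Rightarrow> real set" where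
  "RPE sig lam mu psi sigma_v rho = {a. hmap sig lam mu psi sigma_v rho a = a}"

definition a_star :: "real \<Rightarrow> real \<Rightarrow> real \<Rightarrow> real \<Rightarrow> real \<Rightarrow> real \<Rightarrow> real" where
  "a_star sig lam mu psi sigma_v rho =
     Lmap_inv sig lam mu psi sigma_v rho
       (Phi_inv ((psi - 1) / ((1 + lam * sig) * psi)))"

end

theory Submission
  imports Defs
begin

text \<open>Given a belief a, inflation is the minimum of two affine functions of a and the shock e: the
  ZLB branch, with slope k = 1 + lam sig in a, and the Taylor-rule branch, with the smaller slope
  K = k / (1 + lam sig psi) < 1; the ZLB branch is the smaller one exactly when e lies below a
  threshold that decreases in a. Averaging over e, the mean inflation h has slope
  K + (k - K) Phi (L a) at a. We avoid differentiating under the integral by bracketing the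
  difference quotient of h between a and b by this expression at b and at a. The slope of
  h(a) - a therefore decreases strictly and vanishes at a*, so h(a) - a increases strictly up to
  a* and decreases strictly after it; since h(a) \<le> K a and h(a) \<le> k a + lam sig mu, it is
  negative for large |a|. Such a function has two zeros, one or none according as its maximum
  h(a*) - a* is positive, zero or negative.\<close>

section \<open>The normal distribution\<close>

lemma real_distribution_normal_density:
  "0 < \<sigma> \<Longrightarrow> real_distribution (density lborel (normal_density \<mu> \<sigma>))"
  using prob_space_normal_density by (auto simp: real_distribution_def real_distribution_axioms_def)

lemma null_sets_normal_density_iff:
  assumes "0 < \<sigma>"
  shows "A \<in> null_sets (density lborel (normal_density \<mu> \<sigma>)) \<longleftrightarrow> A \<in> null_sets lborel"
proof -
  have "normal_density \<mu> \<sigma> x \<noteq> 0" for x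
    using normal_density_pos[OF assms] by (metis less_irrefl)
  then have "A \<in> null_sets (density lborel (normal_density \<mu> \<sigma>))
      \<longleftrightarrow> A \<in> sets lborel \<and> (AE x in lborel. x \<notin> A)"
    by (simp add: null_sets_density_iff)
  then show ?thesis
    using AE_iff_null_sets[of A lborel] by blast
qed

lemma Phi_eq_cdf: "Phi = cdf (density lborel std_normal_density)"
  by (simp add: fun_eq_iff Phi_def cdf_def)

lemma isCont_Phi: "isCont Phi x"
proof -
  interpret real_distribution "density lborel std_normal_density"
    by (simp add: real_distribution_normal_density)
  have "{x} \<in> null_sets (density lborel std_normal_density)"
    unfolding null_sets_normal_density_iff[OF zero_less_one] by (simp add: finite_imp_null_set_lborel)
  then show ?thesis
    unfolding Phi_eq_cdf isCont_cdf by (rule measure_eq_0_null_sets)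
qed

lemma Phi_strict_mono: "strict_mono Phi"
proof
  fix x y :: real assume "x < y"
  interpret real_distribution "density lborel std_normal_density"
    by (simp add: real_distribution_normal_density)
  have "{x<..y} \<notin> null_sets (density lborel std_normal_density)"
    unfolding null_sets_normal_density_iff[OF zero_less_one] using \<open>x < y\<close> by (simp add: null_sets_def)
  then have "0 < measure (density lborel std_normal_density) {x<..y}"
    using emeasure_eq_measure by (auto simp: zero_less_measure_iff)
  then show "Phi x < Phi y"
    unfolding Phi_eq_cdf using cdf_diff_eq[OF \<open>x < y\<close>] by simp
qed

lemma Phi_Phi_inv:
  assumes "0 < p" "p < 1"
  shows "Phi (Phi_inv p) = p"
proof -
  interpret real_distribution "density lborel std_normal_density"
    by (simp add: real_distribution_normal_density)
  have "eventually (\<lambda>z. Phi z < p) at_bot"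
    using order_tendstoD(2)[OF cdf_lim_at_bot \<open>0 < p\<close>] unfolding Phi_eq_cdf .
  then obtain a where a: "Phi a < p"
    by (auto simp: eventually_at_bot_linorder)
  have "eventually (\<lambda>z. p < Phi z) at_top"
    using order_tendstoD(1)[OF cdf_lim_at_top_prob \<open>p < 1\<close>] unfolding Phi_eq_cdf .
  then obtain b where b: "p < Phi b"
    by (auto simp: eventually_at_top_linorder)
  have "a \<le> b"
    using strict_mono_less_eq[OF Phi_strict_mono, of a b] a b by simp
  moreover have "continuous_on {a..b} Phi"
    using isCont_Phi by (simp add: continuous_at_imp_continuous_on)
  ultimately obtain z where "Phi z = p"
    using IVT'[of Phi a p b] a b by (meson less_imp_le)
  moreover have "inj Phi"
    using Phi_strict_mono by (rule strict_mono_imp_inj_on)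
  ultimately have "\<exists>!z. Phi z = p"
    by (auto dest: injD)
  then show ?thesis
    unfolding Phi_inv_def by (rule theI')
qed

lemma cdf_normal_density_scaled:
  fixes s z :: real
  assumes "0 < s"
  shows "cdf (density lborel (normal_density 0 s)) (s * z) = Phi z"
proof -
  have rescale: "ennreal s * (ennreal (normal_density 0 s (s * x)) * indicator {..s * z} (s * x))
      = ennreal (std_normal_density x) * indicator {..z} x" for x
  proof -
    have "s * normal_density 0 s (s * x) = std_normal_density x"
      using assms by (simp add: normal_density_def real_sqrt_mult power_mult_distrib field_simps)
    moreover have "indicator {..s * z} (s * x) = (indicator {..z} x :: ennreal)"
      using assms by (simp add: indicator_def)
    ultimately show ?thesis
      using assms by (simp add: ennreal_mult[symmetric] mult.assoc[symmetric])
  qed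
  have "emeasure (density lborel (normal_density 0 s)) {..s * z}
      = (\<integral>\<^sup>+ x. ennreal (normal_density 0 s x) * indicator {..s * z} x \<partial>lborel)"
    by (simp add: emeasure_density)
  also have "\<dots> = ennreal s * (\<integral>\<^sup>+ x. ennreal (normal_density 0 s (0 + s * x))
                                      * indicator {..s * z} (0 + s * x) \<partial>lborel)"
    using assms by (subst nn_integral_real_affine[where c = s and t = 0]) auto
  also have "\<dots> = (\<integral>\<^sup>+ x. ennreal (std_normal_density x) * indicator {..z} x \<partial>lborel)"
    using assms by (simp add: nn_integral_cmult[symmetric] rescale)
  also have "\<dots> = emeasure (density lborel std_normal_density) {..z}"
    by (simp add: emeasure_density)
  finally show ?thesis
    using assms finite_measure.emeasure_eq_measure[OF prob_space.finite_measure[OF prob_space_normal_density]]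
    by (simp add: cdf_def Phi_def)
qed

section \<open>Functions increasing up to a point and decreasing after it\<close>

lemma strict_mono_on_atMost_if_slope_lower_bound:
  fixes g c :: "real \<Rightarrow> real"
  assumes slope: "\<And>a b. a \<le> b \<Longrightarrow> (b - a) * c b \<le> g b - g a"
    and pos: "\<And>x. x < x0 \<Longrightarrow> 0 < c x" and "0 \<le> c x0"
  shows "strict_mono_on {..x0} g"
proof (rule monotone_onI)
  fix a b assume "a \<in> {..x0}" "b \<in> {..x0}" "a < b"
  define m where "m = (a + b) / 2"
  have "a < m" "m < b" "m < x0"
    using \<open>a < b\<close> \<open>b \<in> {..x0}\<close> by (auto simp: m_def)
  then have "g a < g m"
    using slope[of a m] pos[of m] by (smt (verit) mult_pos_pos)
  moreover have "0 \<le> c b"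
    using pos[of b] \<open>0 \<le> c x0\<close> \<open>b \<in> {..x0}\<close> by (cases "b = x0") auto
  then have "g m \<le> g b"
    using slope[of m b] \<open>m < b\<close> by (smt (verit) mult_nonneg_nonneg)
  ultimately show "g a < g b"
    by simp
qed

lemma strict_antimono_on_atLeast_if_slope_upper_bound:
  fixes g c :: "real \<Rightarrow> real"
  assumes slope: "\<And>a b. a \<le> b \<Longrightarrow> g b - g a \<le> (b - a) * c a"
    and neg: "\<And>x. x0 < x \<Longrightarrow> c x < 0" and "c x0 \<le> 0"
  shows "strict_antimono_on {x0..} g"
proof -
  have reflected: "strict_mono_on {..- x0} (\<lambda>x. g (- x))"
  proof (rule strict_mono_on_atMost_if_slope_lower_bound[where c = "\<lambda>x. - c (- x)"])
    fix a b :: real assume "a \<le> b"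
    then show "(b - a) * - c (- b) \<le> g (- b) - g (- a)"
      using slope[of "- b" "- a"] by simp
  qed (use neg \<open>c x0 \<le> 0\<close> in auto)
  show ?thesis
  proof (rule monotone_onI)
    fix a b assume "a \<in> {x0..}" "b \<in> {x0..}" "a < b"
    then show "g b < g a"
      using strict_mono_onD[OF reflected, of "- b" "- a"] by simp
  qed
qed

lemma unimodal_max_pos_imp_two_zeros:
  fixes g :: "real \<Rightarrow> real"
  assumes cont: "continuous_on UNIV g"
    and inc: "strict_mono_on {..x0} g" and dec: "strict_antimono_on {x0..} g"
    and bot: "eventually (\<lambda>x. g x < 0) at_bot" and top: "eventually (\<lambda>x. g x < 0) at_top"
    and "0 < g x0"
  shows "card {x. g x = 0} = 2"
proof -
  obtain a1 where "a1 \<le> x0" "g a1 < 0"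
    using bot by (metis eventually_at_bot_linorder min.cobounded1 min.cobounded2)
  then obtain r1 where r1: "r1 \<le> x0" "g r1 = 0"
    using IVT'[of g a1 0 x0] \<open>0 < g x0\<close> continuous_on_subset[OF cont] by fastforce
  obtain a2 where "x0 \<le> a2" "g a2 < 0"
    using top by (metis eventually_at_top_linorder max.cobounded1 max.cobounded2)
  then obtain r2 where r2: "x0 \<le> r2" "g r2 = 0"
    using IVT2'[of g a2 0 x0] \<open>0 < g x0\<close> continuous_on_subset[OF cont] by fastforce
  have "r1 \<noteq> r2"
    using r1 r2 \<open>0 < g x0\<close> by force
  moreover have "{x. g x = 0} = {r1, r2}"
  proof (intro equalityI subsetI)
    fix x assume "x \<in> {x. g x = 0}"
    then have "g x = g r1" "g x = g r2"
      using r1 r2 by simp_all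
    moreover have "inj_on g {..x0}" "inj_on g {x0..}"
      using strict_mono_on_imp_inj_on[OF inc] dec strict_antimono_iff_antimono by auto
    ultimately show "x \<in> {r1, r2}"
      using r1 r2 inj_onD[of g "{..x0}" x r1] inj_onD[of g "{x0..}" x r2] by (cases "x \<le> x0") auto
  qed (use r1 r2 in auto)
  ultimately show ?thesis
    by simp
qed

lemma unimodal_zeros_iff:
  fixes g :: "real \<Rightarrow> real"
  assumes cont: "continuous_on UNIV g"
    and inc: "strict_mono_on {..x0} g" and dec: "strict_antimono_on {x0..} g"
    and bot: "eventually (\<lambda>x. g x < 0) at_bot" and top: "eventually (\<lambda>x. g x < 0) at_top"
  shows "card {x. g x = 0} = 2 \<longleftrightarrow> 0 < g x0"
    and "{x. g x = 0} = {} \<longleftrightarrow> g x0 < 0"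
proof -
  have below_max: "g x < g x0" if "x \<noteq> x0" for x
    using monotone_onD[OF inc, of x x0] monotone_onD[OF dec, of x0 x] that
    by (cases "x < x0") auto
  consider "0 < g x0" | "g x0 = 0" | "g x0 < 0"
    by linarith
  then have "(card {x. g x = 0} = 2 \<longleftrightarrow> 0 < g x0) \<and> ({x. g x = 0} = {} \<longleftrightarrow> g x0 < 0)"
  proof cases
    case 1
    then have two: "card {x. g x = 0} = 2"
      using unimodal_max_pos_imp_two_zeros[OF assms] by blast
    then have "{x. g x = 0} \<noteq> {}"
      by force
    with 1 two show ?thesis
      by auto
  next
    case 2
    then have "{x. g x = 0} = {x0}"
      using below_max by force
    with 2 show ?thesis
      by auto
  next
    case 3
    then have "g x < 0" for x
      using below_max[of x] by (cases "x = x0") auto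
    then have "{x. g x = 0} = {}"
      by (simp add: Collect_empty_eq less_imp_neq)
    with 3 show ?thesis
      by auto
  qed
  then show "card {x. g x = 0} = 2 \<longleftrightarrow> 0 < g x0" "{x. g x = 0} = {} \<longleftrightarrow> g x0 < 0"
    by blast+
qed

section \<open>Mean inflation under restricted perceptions\<close>

lemma min_shift_diff_bounds:
  fixes x y d k K :: real
  assumes "0 \<le> d" "K \<le> k"
  shows "d * (if x + k * d \<le> y + K * d then k else K) \<le> min (x + k * d) (y + K * d) - min x y"
    and "min (x + k * d) (y + K * d) - min x y \<le> d * (if x \<le> y then k else K)"
proof -
  have "K * d \<le> k * d"
    using assms by (rule mult_right_mono[rotated])
  then show "d * (if x + k * d \<le> y + K * d then k else K) \<le> min (x + k * d) (y + K * d) - min x y"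
    and "min (x + k * d) (y + K * d) - min x y \<le> d * (if x \<le> y then k else K)"
    by (auto simp: min_def algebra_simps)
qed

locale zlb_economy =
  fixes sig lam mu psi :: real
  assumes sig_pos: "0 < sig" and lam_pos: "0 < lam" and mu_pos: "0 < mu" and psi_gt_1: "1 < psi"
begin

definition zlb_slope :: real where
  "zlb_slope = 1 + lam * sig"

definition taylor_slope :: real where
  "taylor_slope = zlb_slope / (1 + lam * sig * psi)"

definition zlb_threshold :: "real \<Rightarrow> real" where
  "zlb_threshold a = (- mu / psi - zlb_slope * a - lam * sig * mu) / lam"

definition infl_zlb :: "real \<Rightarrow> real \<Rightarrow> real" where
  "infl_zlb a e = zlb_slope * a + lam * sig * mu + lam * e"

definition infl_taylor :: "real \<Rightarrow> real \<Rightarrow> real" where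
  "infl_taylor a e = taylor_slope * a + lam / (1 + lam * sig * psi) * e"

lemma zlb_slope_gt_1: "1 < zlb_slope"
  using sig_pos lam_pos by (simp add: zlb_slope_def)

lemma zlb_slope_lt_denominator: "zlb_slope < 1 + lam * sig * psi"
  using sig_pos lam_pos psi_gt_1 by (simp add: zlb_slope_def)

lemma taylor_slope_bounds: "0 < taylor_slope" "taylor_slope < 1" "taylor_slope < zlb_slope"
  using zlb_slope_gt_1 zlb_slope_lt_denominator
  by (simp_all add: taylor_slope_def divide_less_eq)

definition critical_zlb_prob :: real where
  "critical_zlb_prob = (psi - 1) / (zlb_slope * psi)"

lemma critical_zlb_prob_bounds: "0 < critical_zlb_prob" "critical_zlb_prob < 1"
proof -
  have "psi - 1 < zlb_slope * psi"
    using zlb_slope_gt_1 psi_gt_1 by (smt (verit) mult_less_cancel_right2)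
  then show "0 < critical_zlb_prob" "critical_zlb_prob < 1"
    using zlb_slope_gt_1 psi_gt_1 by (simp_all add: critical_zlb_prob_def divide_less_eq)
qed

lemma slope_at_critical_zlb_prob:
  "taylor_slope + (zlb_slope - taylor_slope) * critical_zlb_prob = 1"
proof -
  define D where "D = 1 + lam * sig * psi"
  have D_eq: "D = zlb_slope * psi - psi + 1"
    by (simp add: D_def zlb_slope_def algebra_simps)
  have "0 < D"
    using zlb_slope_gt_1 zlb_slope_lt_denominator by (simp add: D_def)
  then show ?thesis
    using zlb_slope_gt_1 psi_gt_1
    unfolding taylor_slope_def critical_zlb_prob_def D_def[symmetric]
    by (simp add: field_simps) (simp add: D_eq algebra_simps)
qed

lemma infl_zlb_le_infl_taylor_iff:
  "infl_zlb a e \<le> infl_taylor a e \<longleftrightarrow> psi * infl_zlb a e \<le> - mu"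
proof -
  define D where "D = 1 + lam * sig * psi"
  have "0 < D"
    using zlb_slope_gt_1 zlb_slope_lt_denominator by (simp add: D_def)
  then have "D * infl_taylor a e = zlb_slope * a + lam * e"
    unfolding infl_taylor_def taylor_slope_def D_def[symmetric] by (simp add: field_simps)
  then have "D * (infl_zlb a e - infl_taylor a e) = lam * sig * (psi * infl_zlb a e + mu)"
    unfolding infl_zlb_def D_def zlb_slope_def by (simp add: algebra_simps)
  then show ?thesis
    using \<open>0 < D\<close> sig_pos lam_pos by (smt (verit) mult_pos_pos zero_less_mult_iff)
qed

lemma zlb_binds_iff: "psi * infl_zlb a e \<le> - mu \<longleftrightarrow> e \<le> zlb_threshold a"
  using lam_pos psi_gt_1
  by (simp add: infl_zlb_def zlb_threshold_def field_simps)

lemma infl_eq_min: "infl sig lam mu psi a e = min (infl_zlb a e) (infl_taylor a e)"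
proof -
  have "infl sig lam mu psi a e = (if psi * infl_zlb a e \<le> - mu then infl_zlb a e else infl_taylor a e)"
    unfolding infl_def infl_zlb_def infl_taylor_def taylor_slope_def zlb_slope_def ..
  then show ?thesis
    using infl_zlb_le_infl_taylor_iff by (simp add: min_def)
qed

lemma infl_diff_bounds:
  assumes "a \<le> b"
  shows "(b - a) * (if e \<le> zlb_threshold b then zlb_slope else taylor_slope)
           \<le> infl sig lam mu psi b e - infl sig lam mu psi a e"
    and "infl sig lam mu psi b e - infl sig lam mu psi a e
           \<le> (b - a) * (if e \<le> zlb_threshold a then zlb_slope else taylor_slope)"
proof -
  have shift: "infl_zlb b e = infl_zlb a e + zlb_slope * (b - a)"
    "infl_taylor b e = infl_taylor a e + taylor_slope * (b - a)"
    by (simp_all add: infl_zlb_def infl_taylor_def algebra_simps)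
  note min_shift_diff_bounds[where x = "infl_zlb a e" and y = "infl_taylor a e" and d = "b - a"
      and k = zlb_slope and K = taylor_slope, folded shift]
  then show "(b - a) * (if e \<le> zlb_threshold b then zlb_slope else taylor_slope)
           \<le> infl sig lam mu psi b e - infl sig lam mu psi a e"
    and "infl sig lam mu psi b e - infl sig lam mu psi a e
           \<le> (b - a) * (if e \<le> zlb_threshold a then zlb_slope else taylor_slope)"
    using assms taylor_slope_bounds(3)
    by (simp_all add: infl_eq_min infl_zlb_le_infl_taylor_iff zlb_binds_iff)
qed

definition mean_infl :: "real measure \<Rightarrow> real \<Rightarrow> real" where
  "mean_infl M a = (\<integral>e. infl sig lam mu psi a e \<partial>M)"

context
  fixes M :: "real measure"
  assumes distribution: "real_distribution M" and integrable_identity: "integrable M (\<lambda>e. e)"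
begin

interpretation real_distribution M
  by (rule distribution)

lemma integrable_affine_shock: "integrable M (\<lambda>e. c + d * e)"
  using integrable_identity by simp

lemma integral_affine_shock: "(\<integral>e. c + d * e \<partial>M) = c + d * (\<integral>e. e \<partial>M)"
  using integrable_identity by (simp add: prob_space[simplified])

lemma integrable_infl: "integrable M (infl sig lam mu psi a)"
  unfolding infl_eq_min[abs_def] infl_zlb_def infl_taylor_def
  by (intro integrable_min integrable_affine_shock[where c = "_ + _"] integrable_affine_shock)

lemma integral_if_le_cdf:
  "integrable M (\<lambda>e. if e \<le> t then c else d)"
  "(\<integral>e. (if e \<le> t then c else d) \<partial>M) = d + (c - d) * cdf M t"
proof -
  have step: "(\<lambda>e. if e \<le> t then c else d) = (\<lambda>e. d + (c - d) * indicator {..t} e)"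
    by (auto simp: fun_eq_iff)
  have "integrable M (indicator {..t} :: real \<Rightarrow> real)"
    by (rule integrable_real_indicator) (auto simp: emeasure_eq_measure)
  then show "integrable M (\<lambda>e. if e \<le> t then c else d)"
    and "(\<integral>e. (if e \<le> t then c else d) \<partial>M) = d + (c - d) * cdf M t"
    unfolding step by (simp_all add: prob_space[simplified] cdf_def)
qed

lemma mean_infl_diff_bounds:
  assumes "a \<le> b"
  shows "(b - a) * (taylor_slope + (zlb_slope - taylor_slope) * cdf M (zlb_threshold b))
           \<le> mean_infl M b - mean_infl M a"
    and "mean_infl M b - mean_infl M a
           \<le> (b - a) * (taylor_slope + (zlb_slope - taylor_slope) * cdf M (zlb_threshold a))"
proof -
  have diff: "mean_infl M b - mean_infl M a = (\<integral>e. infl sig lam mu psi b e - infl sig lam mu psi a e \<partial>M)"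
    unfolding mean_infl_def using integrable_infl by simp
  have step: "(\<integral>e. (b - a) * (if e \<le> t then zlb_slope else taylor_slope) \<partial>M)
      = (b - a) * (taylor_slope + (zlb_slope - taylor_slope) * cdf M t)" for t
    using integral_if_le_cdf by simp
  show "(b - a) * (taylor_slope + (zlb_slope - taylor_slope) * cdf M (zlb_threshold b))
           \<le> mean_infl M b - mean_infl M a"
    unfolding diff step[symmetric]
    by (intro integral_mono infl_diff_bounds(1)[OF assms] integrable_infl
          Bochner_Integration.integrable_diff integrable_mult_right integral_if_le_cdf(1))
  show "mean_infl M b - mean_infl M a
           \<le> (b - a) * (taylor_slope + (zlb_slope - taylor_slope) * cdf M (zlb_threshold a))"
    unfolding diff step[symmetric]
    by (intro integral_mono infl_diff_bounds(2)[OF assms] integrable_infl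
          Bochner_Integration.integrable_diff integrable_mult_right integral_if_le_cdf(1))
qed

lemma lipschitz_mean_infl: "lipschitz_on zlb_slope UNIV (mean_infl M)"
proof (rule lipschitz_onI)
  have bound: "\<bar>mean_infl M b - mean_infl M a\<bar> \<le> zlb_slope * (b - a)" if "a \<le> b" for a b
  proof -
    have "(zlb_slope - taylor_slope) * cdf M t \<le> zlb_slope - taylor_slope" for t
      using taylor_slope_bounds(3) cdf_bounded_prob[of t] by (simp add: mult_left_le)
    moreover have "0 \<le> (zlb_slope - taylor_slope) * cdf M t" for t
      using taylor_slope_bounds(3) cdf_nonneg[of t] by simp
    ultimately have "0 \<le> taylor_slope + (zlb_slope - taylor_slope) * cdf M t"
      and "taylor_slope + (zlb_slope - taylor_slope) * cdf M t \<le> zlb_slope" for t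
      using taylor_slope_bounds(1) by (smt (verit))+
    then have "0 \<le> (b - a) * (taylor_slope + (zlb_slope - taylor_slope) * cdf M (zlb_threshold b))"
      and "(b - a) * (taylor_slope + (zlb_slope - taylor_slope) * cdf M (zlb_threshold a))
             \<le> zlb_slope * (b - a)"
      using that by (simp_all add: mult_left_mono mult.commute)
    then show ?thesis
      using mean_infl_diff_bounds[OF that] by linarith
  qed
  show "dist (mean_infl M a) (mean_infl M b) \<le> zlb_slope * dist a b" for a b
    using bound[of a b] bound[of b a] by (cases "a \<le> b") (auto simp: dist_real_def abs_minus_commute)
qed (use zlb_slope_gt_1 in simp)

lemma mean_infl_upper_bounds:
  assumes "(\<integral>e. e \<partial>M) = 0"
  shows "mean_infl M a \<le> taylor_slope * a"
    and "mean_infl M a \<le> zlb_slope * a + lam * sig * mu"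
proof -
  have "mean_infl M a \<le> (\<integral>e. infl_taylor a e \<partial>M)"
    unfolding mean_infl_def infl_taylor_def
    by (intro integral_mono integrable_infl integrable_affine_shock) (simp add: infl_eq_min infl_taylor_def)
  also have "\<dots> = taylor_slope * a"
    unfolding infl_taylor_def integral_affine_shock assms by simp
  finally show "mean_infl M a \<le> taylor_slope * a" .
  have "mean_infl M a \<le> (\<integral>e. infl_zlb a e \<partial>M)"
    unfolding mean_infl_def infl_zlb_def
    by (intro integral_mono integrable_infl integrable_affine_shock[where c = "_ + _"])
      (simp add: infl_eq_min infl_zlb_def)
  also have "\<dots> = zlb_slope * a + lam * sig * mu"
    unfolding infl_zlb_def integral_affine_shock[where c = "_ + _"] assms by simp
  finally show "mean_infl M a \<le> zlb_slope * a + lam * sig * mu" .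
qed

end

end

section \<open>Normally distributed shocks\<close>

locale rpe_normal_shock = zlb_economy +
  fixes sigma_v rho :: real
  assumes rho_nonneg: "0 \<le> rho" and rho_lt_1: "rho < 1" and sigma_v_pos: "0 < sigma_v"
begin

abbreviation shock :: "real measure" where
  "shock \<equiv> density lborel (normal_density 0 (sigma_eps sigma_v rho))"

abbreviation L :: "real \<Rightarrow> real" where
  "L \<equiv> Lmap sig lam mu psi sigma_v rho"

lemma sigma_eps_pos: "0 < sigma_eps sigma_v rho"
proof -
  have "rho\<^sup>2 < 1"
    using rho_nonneg rho_lt_1 by (simp add: power_less_one_iff abs_if)
  then show ?thesis
    using sigma_v_pos by (simp add: sigma_eps_def)
qed

lemma real_distribution_shock: "real_distribution shock"
  using sigma_eps_pos by (rule real_distribution_normal_density)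

lemma integrable_shock: "integrable shock (\<lambda>e. e)"
  using integrable_normal_moment_nz_1[OF sigma_eps_pos] by (simp add: integrable_density)

lemma integral_shock: "(\<integral>e. e \<partial>shock) = 0"
  using integral_normal_moment_nz_1[OF sigma_eps_pos] by (simp add: integral_density)

lemma hmap_eq_mean_infl: "hmap sig lam mu psi sigma_v rho = mean_infl shock"
  by (simp add: fun_eq_iff hmap_def mean_infl_def)

lemma zlb_threshold_eq_Lmap: "zlb_threshold a = sigma_eps sigma_v rho * L a"
  using sigma_eps_pos by (simp add: zlb_threshold_def Lmap_def zlb_slope_def)

lemma cdf_shock_zlb_threshold: "cdf shock (zlb_threshold a) = Phi (L a)"
  unfolding zlb_threshold_eq_Lmap using sigma_eps_pos by (rule cdf_normal_density_scaled)

lemma Lmap_strict_antimono: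
  assumes "a < b"
  shows "L b < L a"
proof -
  have "zlb_threshold b < zlb_threshold a"
    using assms zlb_slope_gt_1 lam_pos by (simp add: zlb_threshold_def divide_strict_right_mono)
  then show ?thesis
    using sigma_eps_pos by (simp add: zlb_threshold_eq_Lmap)
qed

lemma Lmap_Lmap_inv: "L (Lmap_inv sig lam mu psi sigma_v rho z) = z"
proof -
  define a where "a = (- mu / psi - lam * sig * mu - lam * sigma_eps sigma_v rho * z) / zlb_slope"
  have "zlb_threshold a = sigma_eps sigma_v rho * z"
    using zlb_slope_gt_1 lam_pos by (simp add: a_def zlb_threshold_def field_simps)
  then have "L a = z"
    using sigma_eps_pos by (simp add: zlb_threshold_eq_Lmap)
  moreover have "L b = z \<Longrightarrow> b = a" for b
    using \<open>L a = z\<close> Lmap_strict_antimono by (metis less_irrefl neq_iff)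
  ultimately have "\<exists>!a. L a = z"
    by blast
  then show ?thesis
    unfolding Lmap_inv_def by (rule theI')
qed

definition excess :: "real \<Rightarrow> real" where
  "excess a = hmap sig lam mu psi sigma_v rho a - a"

definition excess_slope :: "real \<Rightarrow> real" where
  "excess_slope a = taylor_slope - 1 + (zlb_slope - taylor_slope) * Phi (L a)"

lemma RPE_eq_zeros_excess: "RPE sig lam mu psi sigma_v rho = {a. excess a = 0}"
  by (simp add: RPE_def excess_def)

lemma excess_diff_bounds:
  assumes "a \<le> b"
  shows "(b - a) * excess_slope b \<le> excess b - excess a"
    and "excess b - excess a \<le> (b - a) * excess_slope a"
  using mean_infl_diff_bounds[OF real_distribution_shock integrable_shock assms]
  by (simp_all add: excess_def excess_slope_def hmap_eq_mean_infl cdf_shock_zlb_threshold algebra_simps)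

lemma excess_slope_strict_antimono:
  assumes "a < b"
  shows "excess_slope b < excess_slope a"
proof -
  have "Phi (L b) < Phi (L a)"
    using Lmap_strict_antimono[OF assms] Phi_strict_mono by (simp add: strict_mono_less)
  then show ?thesis
    using taylor_slope_bounds(3) by (simp add: excess_slope_def)
qed

lemma excess_slope_a_star: "excess_slope (a_star sig lam mu psi sigma_v rho) = 0"
proof -
  have "Phi (L (a_star sig lam mu psi sigma_v rho)) = critical_zlb_prob"
    using Phi_Phi_inv[OF critical_zlb_prob_bounds]
    by (simp add: a_star_def Lmap_Lmap_inv critical_zlb_prob_def zlb_slope_def)
  then show ?thesis
    using slope_at_critical_zlb_prob by (simp add: excess_slope_def)
qed

lemma strict_mono_on_excess: "strict_mono_on {..a_star sig lam mu psi sigma_v rho} excess"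
  using excess_diff_bounds(1) excess_slope_strict_antimono excess_slope_a_star
  by (intro strict_mono_on_atMost_if_slope_lower_bound[where c = excess_slope]) force+

lemma strict_antimono_on_excess: "strict_antimono_on {a_star sig lam mu psi sigma_v rho..} excess"
  using excess_diff_bounds(2) excess_slope_strict_antimono excess_slope_a_star
  by (intro strict_antimono_on_atLeast_if_slope_upper_bound[where c = excess_slope]) force+

lemma continuous_excess: "continuous_on UNIV excess"
proof -
  have "continuous_on UNIV (mean_infl shock)"
    using lipschitz_mean_infl[OF real_distribution_shock integrable_shock]
    by (rule lipschitz_on_continuous_on)
  then show ?thesis
    unfolding excess_def[abs_def] hmap_eq_mean_infl by (intro continuous_intros)
qed

lemma excess_eventually_neg_at_top: "eventually (\<lambda>a. excess a < 0) at_top"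
  unfolding eventually_at_top_linorder
proof (intro exI allI impI)
  fix a :: real assume "1 \<le> a"
  have "excess a \<le> (taylor_slope - 1) * a"
    using mean_infl_upper_bounds(1)[OF real_distribution_shock integrable_shock integral_shock]
    by (simp add: excess_def hmap_eq_mean_infl algebra_simps)
  also have "\<dots> < 0"
    using taylor_slope_bounds(2) \<open>1 \<le> a\<close> by (simp add: mult_neg_pos)
  finally show "excess a < 0" .
qed

lemma excess_eventually_neg_at_bot: "eventually (\<lambda>a. excess a < 0) at_bot"
  unfolding eventually_at_bot_linorder
proof (intro exI allI impI)
  fix a :: real assume "a \<le> - mu - 1"
  have "excess a \<le> lam * sig * (a + mu)"
    using mean_infl_upper_bounds(2)[OF real_distribution_shock integrable_shock integral_shock]
    by (simp add: excess_def hmap_eq_mean_infl zlb_slope_def algebra_simps)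
  also have "\<dots> < 0"
    using lam_pos sig_pos \<open>a \<le> - mu - 1\<close> by (simp add: mult_pos_neg)
  finally show "excess a < 0" .
qed

end

theorem proposition14:
  fixes beta sig lam mu psi sigma_v rho :: real
  assumes "0 < beta" "beta < 1" "0 < sig" "0 < lam" "0 < mu" "1 < psi"
    and "0 \<le> rho" "rho < 1" "0 < sigma_v"
  shows "(card (RPE sig lam mu psi sigma_v rho) = 2 \<longleftrightarrow>
           hmap sig lam mu psi sigma_v rho (a_star sig lam mu psi sigma_v rho)
             > a_star sig lam mu psi sigma_v rho)
       \<and> (RPE sig lam mu psi sigma_v rho = {} \<longleftrightarrow>
           hmap sig lam mu psi sigma_v rho (a_star sig lam mu psi sigma_v rho)
             < a_star sig lam mu psi sigma_v rho)"
proof -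
  \<comment> \<open>beta cancels from the inflation map \<open>infl\<close>.\<close>
  interpret rpe_normal_shock sig lam mu psi sigma_v rho
    using assms by unfold_locales
  note zeros = unimodal_zeros_iff[OF continuous_excess strict_mono_on_excess strict_antimono_on_excess
      excess_eventually_neg_at_bot excess_eventually_neg_at_top]
  show ?thesis
    using zeros by (simp add: RPE_eq_zeros_excess excess_def)
qed

end
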